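(* In the MAD-HTLC game $G(1,\mathrm{red})$ described in the context, $\mathcal{A}$ cannot increase her utility by deviating from the prescribed strategy.
   Context: Blockchain model: $n$ miners; miner $i$ has mining power $\lambda_i>0$, $\sum_i\lambda_i=1$. In each round exactly one miner is chosen, miner $i$ with probability $\lambda_i$, and creates a block containing one transaction of her choice, receiving its fee. An unrelated transaction offering the base fee $f$ is always available. Publishing a transaction reveals its contents (in particular preimages) to everyone. A contract can be redeemed by at most one confirmed transaction. All parties ($\mathcal{A}$, $\mathcal{B}$, miners) are rational and non-myopic with perfect information, with utility the expected tokens owned at the end of the game; miners play best responses. MAD-HTLC: preimages $pre_a,pre_b$ with digests $dig_a=H(pre_a)$, $dig_b=H(pre_b)$, chosen by $\mathcal{B}$; only $\mathcal{B}$ knows $pre_b$; $\mathcal{A}$ knows $pre_a$ only if $\mathcal{B}$ shared it with her. Contracts initiated in block $b_j$ with timeout $T$: MH-Dep ($v^{\mathrm{dep}}$ tokens), redeemable via dep-A (signature of $\mathcal{A}$ and $pre_a$; any block), dep-B (signature of $\mathcal{B}$ and $pre_b$; only at least $T$ blocks after initiation), dep-M (both $pre_a,pre_b$; any block); MH-Col ($v^{\mathrm{col}}$ tokens), redeemable only at least $T$ blocks after initiation via col-B (signature of $\mathcal{B}$) or col-M (both $pre_a,pre_b$). Game: $T$ rounds creating $b_{j+1},\dots,b_{j+T}$; in each round $\mathcal{A},\mathcal{B}$ alternately publish transactions (choosing which, when, and with what fee), then a random miner creates the block. Transactions: $tx^{\mathrm{dep}}_{\mathcal{A}}$ (MH-Dep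 via dep-A, fee $f<f^{\mathrm{dep}}_{\mathcal{A}}<v^{\mathrm{dep}}$); $tx^{\mathrm{dep}}_{\mathcal{B}}$ (MH-Dep via dep-B, fee $f<f^{\mathrm{dep}}_{\mathcal{B}}<v^{\mathrm{dep}}$); $tx^{\mathrm{col}}_{\mathcal{B}}$ (MH-Col via col-B, fee $f<f^{\mathrm{col}}_{\mathcal{B}}<v^{\mathrm{col}}$); $tx^{\mathrm{dc}}_{\mathcal{B}}$ (both, fee $f<f^{\mathrm{dc}}_{\mathcal{B}}<v^{\mathrm{dep}}+v^{\mathrm{col}}$). A miner may include an unrelated transaction (fee $f$), any currently valid published transaction, or, if both preimages were revealed by published transactions, her own transaction redeeming MH-Dep via dep-M (reward $v^{\mathrm{dep}}$, while unredeemed), MH-Col via col-M (reward $v^{\mathrm{col}}$, last round), or both (last round). $G(k,s)$ denotes the subgame just before round $k\in[1,T]$ with MH-Dep redeemable ($s=\mathrm{red}$) or already redeemed; the full game is $G(1,\mathrm{red})$. Prescribed strategies: if $\mathcal{A}$ knows $pre_a$ she publishes $tx^{\mathrm{dep}}_{\mathcal{A}}$ within the first $T-1$ rounds; otherwise she publishes nothing. $\mathcal{B}$ waits until block $b_{j+T-1}$ is created; if $\mathcal{A}$ has not published $tx^{\mathrm{dep}}_{\mathcal{A}}$ he publishes $tx^{\mathrm{dc}}_{\mathcal{B}}$, otherwise he publishes $tx^{\mathrm{col}}_{\mathcal{B}}$. *)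

theory Defs
  imports Complex_Main
begin

text \<open>Rounds are numbered 1..T; round k creates block b_(j+k), i.e. k blocks after initiation.
  In each round A moves first, then B, then a random miner (miner i with probability lam i)
  creates the block containing exactly one transaction.\<close>

datatype tx =
    TxA      (* tx^dep_A : MH-Dep via dep-A *)
  | TxBdep   (* tx^dep_B : MH-Dep via dep-B *)
  | TxBcol   (* tx^col_B : MH-Col via col-B *)
  | TxBdc    (* tx^dc_B  : both contracts by B *)
  | Unrel
  | OwnDepM  (* miner's own tx: MH-Dep via dep-M *)
  | OwnColM  (* miner's own tx: MH-Col via col-M *)
  | OwnBoth  (* miner's own tx: both via dep-M and col-M *)

text \<open>Record of one round: whether A published tx^dep_A in this round, the set of
  transactions B published in this round, the miner chosen, and the block content.\<close>
datatype rnd = Rnd (apub: bool) (bpub: "tx set") (mnr: nat) (blk: tx)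

type_synonym hist = "rnd list"

record params =
  vdep :: real
  vcol :: real
  fbase :: real
  fA :: real
  fB :: real
  fBc :: real
  fdc :: real
  T :: nat
  nm :: nat
  lam :: "nat \<Rightarrow> real"

fun reward :: "params \<Rightarrow> tx \<Rightarrow> real" where
  "reward p TxA = fA p"
| "reward p TxBdep = fB p"
| "reward p TxBcol = fBc p"
| "reward p TxBdc = fdc p"
| "reward p Unrel = fbase p"
| "reward p OwnDepM = vdep p"
| "reward p OwnColM = vcol p"
| "reward p OwnBoth = vdep p + vcol p"

definition A_published :: "hist \<Rightarrow> bool \<Rightarrow> bool" where
  "A_published h a \<longleftrightarrow> a \<or> (\<exists>r\<in>set h. apub r)"

definition published :: "hist \<Rightarrow> bool \<Rightarrow> tx set \<Rightarrow> tx \<Rightarrow> bool" where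
  "published h a bs c \<longleftrightarrow> (c = TxA \<and> A_published h a) \<or> c \<in> bs \<or> (\<exists>r\<in>set h. c \<in> bpub r)"

text \<open>Both preimages revealed by published transactions (pre_a by tx^dep_A,
  pre_b by tx^dep_B or tx^dc_B).\<close>
definition both_revealed :: "hist \<Rightarrow> bool \<Rightarrow> tx set \<Rightarrow> bool" where
  "both_revealed h a bs \<longleftrightarrow> published h a bs TxA \<and> (published h a bs TxBdep \<or> published h a bs TxBdc)"

definition dep_redeemed :: "hist \<Rightarrow> bool" where
  "dep_redeemed h \<longleftrightarrow> (\<exists>r\<in>set h. blk r \<in> {TxA, TxBdep, TxBdc, OwnDepM, OwnBoth})"

definition col_redeemed :: "hist \<Rightarrow> bool" where
  "col_redeemed h \<longleftrightarrow> (\<exists>r\<in>set h. blk r \<in> {TxBcol, TxBdc, OwnColM, OwnBoth})"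

text \<open>Transactions a miner may put in the block of round k = length h + 1.\<close>
fun valid :: "params \<Rightarrow> hist \<Rightarrow> bool \<Rightarrow> tx set \<Rightarrow> tx \<Rightarrow> bool" where
  "valid p h a bs Unrel = True"
| "valid p h a bs TxA = (published h a bs TxA \<and> \<not> dep_redeemed h)"
| "valid p h a bs TxBdep = (published h a bs TxBdep \<and> \<not> dep_redeemed h \<and> T p \<le> length h + 1)"
| "valid p h a bs TxBcol = (published h a bs TxBcol \<and> \<not> col_redeemed h \<and> T p \<le> length h + 1)"
| "valid p h a bs TxBdc = (published h a bs TxBdc \<and> \<not> dep_redeemed h \<and> \<not> col_redeemed h
                            \<and> T p \<le> length h + 1)"
| "valid p h a bs OwnDepM = (both_revealed h a bs \<and> \<not> dep_redeemed h)"
| "valid p h a bs OwnColM = (both_revealed h a bs \<and> \<not> col_redeemed h \<and> T p \<le> length h + 1)"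
| "valid p h a bs OwnBoth = (both_revealed h a bs \<and> \<not> dep_redeemed h \<and> \<not> col_redeemed h
                            \<and> T p \<le> length h + 1)"

definition B_presc :: "params \<Rightarrow> hist \<Rightarrow> bool \<Rightarrow> tx set" where
  "B_presc p h a = (if length h + 1 = T p then (if A_published h a then {TxBcol} else {TxBdc}) else {})"

text \<open>A strategy of A: given the history, whether to publish tx^dep_A in the current round.
  She can only actually do so if she knows pre_a (flag kn).\<close>
definition A_act :: "bool \<Rightarrow> (hist \<Rightarrow> bool) \<Rightarrow> hist \<Rightarrow> bool" where
  "A_act kn \<sigma> h \<longleftrightarrow> kn \<and> \<sigma> h"

definition prescribed_A :: "nat \<Rightarrow> hist \<Rightarrow> bool" where
  "prescribed_A r0 h \<longleftrightarrow> length h + 1 = r0"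

definition cur_step :: "params \<Rightarrow> bool \<Rightarrow> (hist \<Rightarrow> bool) \<Rightarrow> hist \<Rightarrow> nat \<Rightarrow> tx \<Rightarrow> rnd" where
  "cur_step p kn \<sigma> h i c = Rnd (A_act kn \<sigma> h) (B_presc p h (A_act kn \<sigma> h)) i c"

definition valid_now :: "params \<Rightarrow> bool \<Rightarrow> (hist \<Rightarrow> bool) \<Rightarrow> hist \<Rightarrow> tx \<Rightarrow> bool" where
  "valid_now p kn \<sigma> h c = valid p h (A_act kn \<sigma> h) (B_presc p h (A_act kn \<sigma> h)) c"

text \<open>Expected value of a terminal payoff g, with r rounds remaining from history h,
  when miner i (chosen with probability lam i) includes mu i h.\<close>
primrec expect :: "params \<Rightarrow> bool \<Rightarrow> (hist \<Rightarrow> bool) \<Rightarrow> (nat \<Rightarrow> hist \<Rightarrow> tx)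
                    \<Rightarrow> (hist \<Rightarrow> real) \<Rightarrow> nat \<Rightarrow> hist \<Rightarrow> real" where
  "expect p kn \<sigma> \<mu> g 0 h = g h"
| "expect p kn \<sigma> \<mu> g (Suc r) h =
     (\<Sum>i<nm p. lam p i * expect p kn \<sigma> \<mu> g r (h @ [cur_step p kn \<sigma> h i (\<mu> i h)]))"

definition A_payoff :: "params \<Rightarrow> hist \<Rightarrow> real" where
  "A_payoff p h = (if \<exists>r\<in>set h. blk r = TxA then vdep p - fA p else 0)"

definition miner_payoff :: "params \<Rightarrow> nat \<Rightarrow> hist \<Rightarrow> real" where
  "miner_payoff p i h = (\<Sum>r\<leftarrow>h. if mnr r = i then reward p (blk r) else 0)"

text \<open>Miners play (subgame-perfect) best responses: at every decision node (every history of
  length < T, every miner) the chosen transaction is valid and maximises that miner's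
  expected final payoff given continuation play.\<close>
definition miners_best_response :: "params \<Rightarrow> bool \<Rightarrow> (hist \<Rightarrow> bool) \<Rightarrow> (nat \<Rightarrow> hist \<Rightarrow> tx) \<Rightarrow> bool" where
  "miners_best_response p kn \<sigma> \<mu> \<longleftrightarrow>
    (\<forall>h i. length h < T p \<longrightarrow> i < nm p \<longrightarrow>
       valid_now p kn \<sigma> h (\<mu> i h) \<and>
       (\<forall>c. valid_now p kn \<sigma> h c \<longrightarrow>
          expect p kn \<sigma> \<mu> (miner_payoff p i) (T p - Suc (length h)) (h @ [cur_step p kn \<sigma> h i c])
          \<le> expect p kn \<sigma> \<mu> (miner_payoff p i) (T p - Suc (length h)) (h @ [cur_step p kn \<sigma> h i (\<mu> i h)])))"

definition utility_A :: "params \<Rightarrow> bool \<Rightarrow> (hist \<Rightarrow> bool) \<Rightarrow> (nat \<Rightarrow> hist \<Rightarrow> tx) \<Rightarrow> real" where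
  "utility_A p kn \<sigma> \<mu> = expect p kn \<sigma> \<mu> (A_payoff p) (T p) []"

end

theory Submission
  imports Defs
begin

text \<open>If A does not know pre_a she can publish nothing, tx^dep_A is never mined and her
  utility is 0 whatever she does. Otherwise every outcome pays her at most vdep - fA, and the
  prescribed strategy attains this with certainty: before round T-1 only unrelated
  transactions and tx^dep_A can be mined, and in round T-1 every miner prefers tx^dep_A.
  Mining it earns fA now and leaves tx^col_B (fee fBc) for round T, whereas the unrelated
  transaction earns fbase now and round T then offers at most max fA fBc; since the miner mines
  again with probability lam i \<le> 1, fA + lam i * fBc > fbase + lam i * max fA fBc.\<close>

lemma miner_payoff_snoc:
  "miner_payoff p i (h @ [x]) = miner_payoff p i h + (if mnr x = i then reward p (blk x) else 0)"
  by (simp add: miner_payoff_def)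

lemma expect_eq_const:
  assumes "(\<Sum>j<nm p. lam p j) = 1"
    and final: "\<And>h. Q h \<Longrightarrow> length h = T p \<Longrightarrow> g h = c"
    and step: "\<And>h j. Q h \<Longrightarrow> length h < T p \<Longrightarrow> j < nm p
                 \<Longrightarrow> Q (h @ [cur_step p kn \<sigma> h j (\<mu> j h)])"
    and "Q h" and "length h + r = T p"
  shows "expect p kn \<sigma> \<mu> g r h = c"
  using assms(4,5)
proof (induction r arbitrary: h)
  case 0
  then show ?case using final by simp
next
  case (Suc r)
  have "expect p kn \<sigma> \<mu> g (Suc r) h = (\<Sum>j<nm p. lam p j * c)"
    using Suc step by (auto intro!: sum.cong)
  also have "\<dots> = c" using assms(1) by (simp flip: sum_distrib_right)
  finally show ?case .
qed

lemma expect_le_const: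
  assumes "(\<Sum>j<nm p. lam p j) = 1" and "\<forall>j<nm p. 0 \<le> lam p j"
    and "\<And>h. g h \<le> M"
  shows "expect p kn \<sigma> \<mu> g r h \<le> M"
proof (induction r arbitrary: h)
  case 0
  then show ?case using assms(3) by simp
next
  case (Suc r)
  have "expect p kn \<sigma> \<mu> g (Suc r) h \<le> (\<Sum>j<nm p. lam p j * M)"
    unfolding expect.simps using Suc assms(2) by (auto intro!: sum_mono mult_left_mono)
  also have "\<dots> = M" using assms(1) by (simp flip: sum_distrib_right)
  finally show ?case .
qed

lemma expect_Suc_0_miner_payoff:
  assumes "(\<Sum>j<nm p. lam p j) = 1" and "i < nm p"
  shows "expect p kn \<sigma> \<mu> (miner_payoff p i) (Suc 0) h
           = miner_payoff p i h + lam p i * reward p (\<mu> i h)"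
proof -
  have "expect p kn \<sigma> \<mu> (miner_payoff p i) (Suc 0) h
      = (\<Sum>j<nm p. lam p j * miner_payoff p i h + (if j = i then lam p j * reward p (\<mu> j h) else 0))"
    by (simp add: miner_payoff_snoc cur_step_def algebra_simps if_distrib cong: if_cong)
  also have "\<dots> = miner_payoff p i h * (\<Sum>j<nm p. lam p j) + lam p i * reward p (\<mu> i h)"
    using assms(2) by (simp add: sum.distrib sum_distrib_left mult.commute)
  finally show ?thesis using assms(1) by simp
qed

lemma miners_best_response_valid:
  assumes "miners_best_response p kn \<sigma> \<mu>" and "length h < T p" and "i < nm p"
  shows "valid_now p kn \<sigma> h (\<mu> i h)"
  using assms unfolding miners_best_response_def by blast

lemma miners_best_response_optimal:
  assumes "miners_best_response p kn \<sigma> \<mu>" and "length h < T p" and "i < nm p"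
    and "valid_now p kn \<sigma> h c"
  shows "expect p kn \<sigma> \<mu> (miner_payoff p i) (T p - Suc (length h)) (h @ [cur_step p kn \<sigma> h i c])
           \<le> expect p kn \<sigma> \<mu> (miner_payoff p i) (T p - Suc (length h))
                (h @ [cur_step p kn \<sigma> h i (\<mu> i h)])"
  using assms unfolding miners_best_response_def by blast

lemma miners_best_response_last_round:
  assumes "miners_best_response p kn \<sigma> \<mu>" and "length h + 1 = T p" and "i < nm p"
    and "valid_now p kn \<sigma> h c"
  shows "reward p c \<le> reward p (\<mu> i h)"
  using miners_best_response_optimal[OF assms(1) _ assms(3,4)] assms(2)
  by (simp add: miner_payoff_snoc cur_step_def)

lemma miners_best_response_penultimate_round:
  assumes "miners_best_response p kn \<sigma> \<mu>" and "length h + 2 = T p" and "i < nm p"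
    and "(\<Sum>j<nm p. lam p j) = 1" and "valid_now p kn \<sigma> h c"
  shows "reward p c + lam p i * reward p (\<mu> i (h @ [cur_step p kn \<sigma> h i c]))
           \<le> reward p (\<mu> i h) + lam p i * reward p (\<mu> i (h @ [cur_step p kn \<sigma> h i (\<mu> i h)]))"
proof -
  have "T p - Suc (length h) = Suc 0" using assms(2) by simp
  then have "expect p kn \<sigma> \<mu> (miner_payoff p i) (Suc 0) (h @ [cur_step p kn \<sigma> h i c])
          \<le> expect p kn \<sigma> \<mu> (miner_payoff p i) (Suc 0) (h @ [cur_step p kn \<sigma> h i (\<mu> i h)])"
    using miners_best_response_optimal[OF assms(1) _ assms(3,5)] assms(2) by simp
  then show ?thesis
    unfolding expect_Suc_0_miner_payoff[OF assms(4,3)] by (simp add: miner_payoff_snoc cur_step_def)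
qed

lemma valid_now_cases:
  assumes "\<forall>r\<in>set h. bpub r = {}" and "valid_now p kn \<sigma> h c"
  shows "c = Unrel \<or> c = TxA \<or> c \<in> B_presc p h (A_act kn \<sigma> h)"
  using assms
  by (cases c) (auto simp: valid_now_def both_revealed_def published_def B_presc_def split: if_splits)

lemma utility_A_unknown_preimage:
  assumes "(\<Sum>j<nm p. lam p j) = 1" and "miners_best_response p False \<sigma> \<mu>"
  shows "utility_A p False \<sigma> \<mu> = 0"
proof -
  let ?Q = "\<lambda>h. \<forall>r\<in>set h. blk r \<noteq> TxA \<and> \<not> apub r \<and> TxA \<notin> bpub r"
  have "expect p False \<sigma> \<mu> (A_payoff p) (T p) [] = 0"
  proof (rule expect_eq_const[where Q = ?Q, OF assms(1)])
    show "A_payoff p h = 0" if "?Q h" for h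
      using that by (auto simp: A_payoff_def)
  next
    fix h j
    assume "?Q h" and "length h < T p" and "j < nm p"
    moreover have "valid_now p False \<sigma> h (\<mu> j h)"
      using miners_best_response_valid[OF assms(2)] \<open>length h < T p\<close> \<open>j < nm p\<close> .
    ultimately show "?Q (h @ [cur_step p False \<sigma> h j (\<mu> j h)])"
      by (cases "\<mu> j h")
        (auto simp: cur_step_def valid_now_def published_def A_published_def A_act_def B_presc_def
          split: if_splits)
  qed simp_all
  then show ?thesis by (simp add: utility_A_def)
qed

lemma utility_A_le:
  assumes "(\<Sum>j<nm p. lam p j) = 1" and "\<forall>j<nm p. 0 \<le> lam p j" and "fA p \<le> vdep p"
  shows "utility_A p kn \<sigma> \<mu> \<le> vdep p - fA p"
  unfolding utility_A_def
  by (rule expect_le_const[OF assms(1,2)]) (use assms(3) in \<open>simp add: A_payoff_def\<close>)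

definition depA_mined :: "hist \<Rightarrow> bool" where
  "depA_mined h \<longleftrightarrow> (\<exists>r\<in>set h. blk r = TxA)"

definition early_prescribed_history :: "params \<Rightarrow> nat \<Rightarrow> hist \<Rightarrow> bool" where
  "early_prescribed_history p r0 h \<longleftrightarrow> length h + 2 \<le> T p
     \<and> (\<forall>j<length h. apub (h ! j) = (Suc j = r0))
     \<and> (\<forall>r\<in>set h. bpub r = {} \<and> (blk r = Unrel \<or> blk r = TxA))"

lemma A_published_prescribed:
  assumes "early_prescribed_history p r0 h" and "1 \<le> r0" and "r0 \<le> length h + 1"
  shows "A_published h (A_act True (prescribed_A r0) h)"
proof (cases "r0 = length h + 1")
  case True
  then show ?thesis by (simp add: A_published_def A_act_def prescribed_A_def)
next
  case False
  then have "r0 - 1 < length h" using assms(2,3) by simp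
  then have "apub (h ! (r0 - 1))" and "h ! (r0 - 1) \<in> set h"
    using assms(1,2) unfolding early_prescribed_history_def by auto
  then show ?thesis unfolding A_published_def by blast
qed

lemma early_prescribed_history_snoc:
  assumes "miners_best_response p True (prescribed_A r0) \<mu>"
    and "early_prescribed_history p r0 h" and "length h + 3 \<le> T p" and "j < nm p"
  shows "early_prescribed_history p r0 (h @ [cur_step p True (prescribed_A r0) h j (\<mu> j h)])"
proof -
  have no_B: "B_presc p h a = {}" for a
    using assms(3) by (simp add: B_presc_def)
  have "valid_now p True (prescribed_A r0) h (\<mu> j h)"
    using miners_best_response_valid[OF assms(1) _ assms(4)] assms(3) by simp
  then have "\<mu> j h = Unrel \<or> \<mu> j h = TxA"
    using valid_now_cases assms(2) no_B unfolding early_prescribed_history_def by blast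
  then show ?thesis
    using assms(2,3) no_B unfolding early_prescribed_history_def
    by (auto simp: nth_append cur_step_def A_act_def prescribed_A_def)
qed

lemma prescribed_penultimate_round_mines_depA:
  assumes "\<forall>j<nm p. 0 \<le> lam p j" and "(\<Sum>j<nm p. lam p j) = 1"
    and "fbase p < fA p" and "fbase p < fBc p" and "1 \<le> r0" and "r0 < T p"
    and mbr: "miners_best_response p True (prescribed_A r0) \<mu>"
    and "early_prescribed_history p r0 h" and "length h + 2 = T p" and "\<not> depA_mined h"
    and "i < nm p"
  shows "\<mu> i h = TxA"
proof (rule ccontr)
  assume "\<mu> i h \<noteq> TxA"
  let ?P = "prescribed_A r0"
  let ?next = "\<lambda>x. h @ [cur_step p True ?P h i x]"
  have h_blocks: "\<forall>r\<in>set h. bpub r = {} \<and> blk r = Unrel"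
    using assms(8,10) unfolding early_prescribed_history_def depA_mined_def by auto
  have no_B: "B_presc p h a = {}" for a
    using assms(9) by (simp add: B_presc_def)
  have A_pub: "A_published h (A_act True ?P h)"
    using A_published_prescribed[OF assms(8,5)] assms(6,9) by simp
  have "valid_now p True ?P h (\<mu> i h)"
    using miners_best_response_valid[OF mbr _ assms(11)] assms(9) by simp
  then have "\<mu> i h = Unrel"
    using valid_now_cases h_blocks no_B \<open>\<mu> i h \<noteq> TxA\<close> by blast
  moreover have "valid_now p True ?P h TxA"
    using A_pub h_blocks by (simp add: valid_now_def published_def dep_redeemed_def)
  ultimately have deviation:
    "fA p + lam p i * reward p (\<mu> i (?next TxA))
       \<le> fbase p + lam p i * reward p (\<mu> i (?next Unrel))"
    using miners_best_response_penultimate_round[OF mbr assms(9,11,2)] by fastforce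
  have next_len: "length (?next x) + 1 = T p" for x
    using assms(9) by simp
  have next_bpub: "\<forall>r\<in>set (?next x). bpub r = {}" for x
    using h_blocks no_B by (auto simp: cur_step_def)
  have next_B: "B_presc p (?next x) a = {TxBcol}" for x a
    using next_len A_pub by (auto simp: B_presc_def A_published_def cur_step_def)
  have "valid_now p True ?P (?next TxA) TxBcol"
    using next_len next_B h_blocks
    by (auto simp: valid_now_def published_def col_redeemed_def cur_step_def)
  from miners_best_response_last_round[OF mbr next_len assms(11) this]
  have after_TxA: "fBc p \<le> reward p (\<mu> i (?next TxA))" by simp
  have "valid_now p True ?P (?next Unrel) (\<mu> i (?next Unrel))"
    using miners_best_response_valid[OF mbr _ assms(11)] next_len by (metis less_add_one)
  then have "\<mu> i (?next Unrel) \<in> {Unrel, TxA, TxBcol}"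
    using valid_now_cases[OF next_bpub] next_B by blast
  then have after_Unrel: "reward p (\<mu> i (?next Unrel)) \<le> max (fA p) (fBc p)"
    using assms(3) by auto
  have "0 \<le> lam p i" and "lam p i \<le> 1"
    using assms(1,2,11) member_le_sum[of i "{..<nm p}" "lam p"] by auto
  then have "lam p i * reward p (\<mu> i (?next Unrel)) \<le> lam p i * max (fA p) (fBc p)"
    using after_Unrel by (simp add: mult_left_mono)
  also have "\<dots> \<le> lam p i * fBc p + max 0 (fA p - fBc p)"
    using mult_left_le_one_le[of "fA p - fBc p" "lam p i"] \<open>0 \<le> lam p i\<close> \<open>lam p i \<le> 1\<close>
    by (auto simp: max_def algebra_simps)
  also have "\<dots> < lam p i * fBc p + (fA p - fbase p)"
    using assms(3,4) by simp
  also have "\<dots> \<le> lam p i * reward p (\<mu> i (?next TxA)) + (fA p - fbase p)"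
    using after_TxA \<open>0 \<le> lam p i\<close> by (simp add: mult_left_mono)
  finally show False using deviation by linarith
qed

lemma utility_A_prescribed:
  assumes "\<forall>j<nm p. 0 \<le> lam p j" and "(\<Sum>j<nm p. lam p j) = 1"
    and "fbase p < fA p" and "fbase p < fBc p" and "1 \<le> r0" and "r0 < T p"
    and mbr: "miners_best_response p True (prescribed_A r0) \<mu>"
  shows "utility_A p True (prescribed_A r0) \<mu> = vdep p - fA p"
  unfolding utility_A_def
proof (rule expect_eq_const[where Q = "\<lambda>h. early_prescribed_history p r0 h \<or> depA_mined h"])
  fix h j
  assume inv: "early_prescribed_history p r0 h \<or> depA_mined h"
    and "length h < T p" and "j < nm p"
  let ?h' = "h @ [cur_step p True (prescribed_A r0) h j (\<mu> j h)]"
  consider "depA_mined h" | "early_prescribed_history p r0 h" "\<not> depA_mined h" "length h + 2 = T p"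
    | "early_prescribed_history p r0 h" "length h + 3 \<le> T p"
    using inv by (force simp: early_prescribed_history_def)
  then show "early_prescribed_history p r0 ?h' \<or> depA_mined ?h'"
  proof cases
    case 1
    then show ?thesis by (simp add: depA_mined_def)
  next
    case 2
    then have "\<mu> j h = TxA"
      using prescribed_penultimate_round_mines_depA[OF assms _ _ _ \<open>j < nm p\<close>] by blast
    then show ?thesis by (simp add: depA_mined_def cur_step_def)
  next
    case 3
    then show ?thesis using early_prescribed_history_snoc[OF mbr _ _ \<open>j < nm p\<close>] by blast
  qed
qed (use assms in \<open>auto simp: A_payoff_def depA_mined_def early_prescribed_history_def\<close>)

theorem lemma5:
  fixes p :: params and kn :: bool and \<sigma> :: "hist \<Rightarrow> bool"
    and \<mu> \<mu>0 :: "nat \<Rightarrow> hist \<Rightarrow> tx" and r0 :: nat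
  assumes "\<forall>i<nm p. lam p i > 0" and "(\<Sum>i<nm p. lam p i) = 1"
    and "fbase p < fA p" and "fA p < vdep p"
    and "fbase p < fB p" and "fB p < vdep p"
    and "fbase p < fBc p" and "fBc p < vcol p"
    and "fbase p < fdc p" and "fdc p < vdep p + vcol p"
    and "2 \<le> T p" and "1 \<le> r0" and "r0 < T p"
    and "miners_best_response p kn \<sigma> \<mu>"
    and "miners_best_response p kn (prescribed_A r0) \<mu>0"
  shows "utility_A p kn \<sigma> \<mu> \<le> utility_A p kn (prescribed_A r0) \<mu>0"
proof (cases kn)
  case False
  then show ?thesis
    using utility_A_unknown_preimage[OF assms(2)] assms(14,15) by simp
next
  case True
  have lam_nonneg: "\<forall>i<nm p. 0 \<le> lam p i"
    using assms(1) by (simp add: less_imp_le)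
  have "utility_A p kn \<sigma> \<mu> \<le> vdep p - fA p"
    using utility_A_le[OF assms(2) lam_nonneg] assms(4) by simp
  also have "\<dots> = utility_A p kn (prescribed_A r0) \<mu>0"
    using utility_A_prescribed[OF lam_nonneg assms(2,3,7,12,13)] assms(15) True by simp
  finally show ?thesis .
qed

end
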